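(* For all integers $n\ge 2$ and $1\le k<n$, the independence number of $G=H_B(n,k)$ is $\alpha(G)=\sum_{i=1}^n 2^{i-1}\binom{n}{i}-\binom{n}{k}$ (and $V_2$ is a maximum independent set).
   Context: Fix integers $n\ge 2$ and $1\le k<n$ and positive real numbers $x_1<x_2<\dots<x_n$. Let $\mathscr{B}_n=\{\pm x_1,\pm x_2,\dots,\pm x_{n-1},x_n\}$ (so $-x_n\notin\mathscr{B}_n$). Let $\phi(\mathscr{B}_n)$ be the family of all nonempty subsets $S\subseteq\mathscr{B}_n$ whose elements have pairwise distinct absolute values and whose element of largest absolute value is positive. Let $\mathscr{B}_n^+=\{x_1,\dots,x_n\}$, let $V_1$ be the set of all $k$-element subsets of $\mathscr{B}_n^+$, and let $V_2=\phi(\mathscr{B}_n)\setminus V_1$. For $A\in\phi(\mathscr{B}_n)$ put $A^\dagger=\{|a|:a\in A\}$. The bipartite Kneser B type-$k$ graph $H_B(n,k)$ is the simple graph with vertex set $V_1\cup V_2$ in which $X\in V_1$ and $Y\in V_2$ are adjacent if and only if $X\subseteq Y^\dagger$ or $Y^\dagger\subseteq X$, and there are no other edges. The independence number is the maximum size of a set of pairwise nonadjacent vertices. *)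

theory Defs
  imports Complex_Main
begin

definition Bset :: "(nat \<Rightarrow> real) \<Rightarrow> nat \<Rightarrow> real set" where
  "Bset x n = x ` {1..n} \<union> uminus ` x ` {1..n-1}"

definition Bplus :: "(nat \<Rightarrow> real) \<Rightarrow> nat \<Rightarrow> real set" where
  "Bplus x n = x ` {1..n}"

definition phiB :: "(nat \<Rightarrow> real) \<Rightarrow> nat \<Rightarrow> real set set" where
  "phiB x n = {S. S \<noteq> {} \<and> S \<subseteq> Bset x n \<and> inj_on abs S \<and>
      (\<exists>a\<in>S. a > 0 \<and> (\<forall>b\<in>S. \<bar>b\<bar> \<le> \<bar>a\<bar>))}"

definition dagger :: "real set \<Rightarrow> real set" where
  "dagger A = abs ` A"

definition V1 :: "(nat \<Rightarrow> real) \<Rightarrow> nat \<Rightarrow> nat \<Rightarrow> real set set" where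
  "V1 x n k = {S. S \<subseteq> Bplus x n \<and> card S = k}"

definition V2 :: "(nat \<Rightarrow> real) \<Rightarrow> nat \<Rightarrow> nat \<Rightarrow> real set set" where
  "V2 x n k = phiB x n - V1 x n k"

definition HB_vertices :: "(nat \<Rightarrow> real) \<Rightarrow> nat \<Rightarrow> nat \<Rightarrow> real set set" where
  "HB_vertices x n k = V1 x n k \<union> V2 x n k"

definition HB_adj :: "(nat \<Rightarrow> real) \<Rightarrow> nat \<Rightarrow> nat \<Rightarrow> real set \<Rightarrow> real set \<Rightarrow> bool" where
  "HB_adj x n k A B \<longleftrightarrow>
     (A \<in> V1 x n k \<and> B \<in> V2 x n k \<and> (A \<subseteq> dagger B \<or> dagger B \<subseteq> A)) \<or>
     (B \<in> V1 x n k \<and> A \<in> V2 x n k \<and> (B \<subseteq> dagger A \<or> dagger A \<subseteq> B))"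

definition indep_set :: "'a set \<Rightarrow> ('a \<Rightarrow> 'a \<Rightarrow> bool) \<Rightarrow> 'a set \<Rightarrow> bool" where
  "indep_set V E S \<longleftrightarrow> S \<subseteq> V \<and> (\<forall>a\<in>S. \<forall>b\<in>S. \<not> E a b)"

definition independence_number :: "'a set \<Rightarrow> ('a \<Rightarrow> 'a \<Rightarrow> bool) \<Rightarrow> nat" where
  "independence_number V E = Max (card ` {S. indep_set V E S})"

end

theory Submission
  imports Defs
begin

text \<open>No two vertices of \<open>V\<^sub>2\<close> are adjacent, so \<open>V\<^sub>2\<close> is independent. Conversely, \<open>V\<^sub>1\<close> is
  matched injectively into \<open>V\<^sub>2\<close> by a map \<open>f\<close> with \<open>X \<subseteq> f(X)\<^sup>\<dagger>\<close>: for \<open>k \<ge> 2\<close> negate the least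
  element of \<open>X\<close>; for \<open>k = 1\<close> send \<open>{p}\<close> to \<open>{-p, x\<^sub>n}\<close>, and \<open>{x\<^sub>n}\<close> to \<open>{x\<^sub>1, x\<^sub>n}\<close>. An
  independent set \<open>S\<close> is disjoint from \<open>f(S \<inter> V\<^sub>1) \<subseteq> V\<^sub>2\<close>, hence \<open>|S| \<le> |V\<^sub>2|\<close>. Finally a
  member of \<open>\<phi>(B\<^sub>n)\<close> is a nonempty \<open>T \<subseteq> B\<^sub>n\<^sup>+\<close> together with the set \<open>N \<subseteq> T - {max T}\<close> of
  its elements to be negated, which gives \<open>|\<phi>(B\<^sub>n)| = \<Sum>\<^sub>i 2^(i-1) (n choose i)\<close>.\<close>

lemma card_Sigma_Pow_Diff_Max:
  fixes A :: "'a::linorder set"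
  assumes "finite A"
  shows "card (SIGMA T:Pow A - {{}}. Pow (T - {Max T})) = (\<Sum>i=1..card A. 2^(i-1) * (card A choose i))"
proof -
  have fin: "T \<in> Pow A \<Longrightarrow> finite T" for T using assms finite_subset by blast
  have "card (SIGMA T:Pow A - {{}}. Pow (T - {Max T})) = (\<Sum>T\<in>Pow A - {{}}. 2 ^ (card T - 1))"
    using assms fin by (simp add: card_Pow)
  also have "\<dots> = (\<Sum>i=1..card A. \<Sum>T\<in>{T \<in> Pow A - {{}}. card T = i}. 2 ^ (card T - 1))"
    using assms fin by (intro sum.group[symmetric]) (auto simp: card_mono Suc_le_eq card_gt_0_iff)
  also have "\<dots> = (\<Sum>i=1..card A. 2^(i-1) * (card A choose i))"
  proof (rule sum.cong)
    fix i :: nat assume "i \<in> {1..card A}"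
    then have "{T \<in> Pow A - {{}}. card T = i} = {T. T \<subseteq> A \<and> card T = i}" by auto
    then show "(\<Sum>T\<in>{T \<in> Pow A - {{}}. card T = i}. 2 ^ (card T - 1)) = 2^(i-1) * (card A choose i)"
      using n_subsets[OF assms, of i] by simp
  qed simp
  finally show ?thesis .
qed

lemma Min_less_Max:
  fixes X :: "'a::linorder set"
  assumes "2 \<le> card X" and "finite X"
  shows "Min X < Max X"
proof -
  have "X \<noteq> {}" using assms(1) by (intro notI) simp
  then have "card (X - {Min X}) \<noteq> 0" using assms by simp
  then obtain b where "b \<in> X" "b \<noteq> Min X" by (metis card.empty DiffE ex_in_conv singletonI)
  then have "Min X < b" "b \<le> Max X" using assms(2) by (simp_all add: order.not_eq_order_implies_strict)
  then show ?thesis by simp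
qed

lemma independence_number_eq_card_if_matching:
  assumes "finite B" and indep: "indep_set (A \<union> B) E B"
    and f: "inj_on f A" "f ` A \<subseteq> B" "\<And>a. a \<in> A \<Longrightarrow> E a (f a)"
  shows "independence_number (A \<union> B) E = card B"
proof -
  have bound: "card S \<le> card B" if "indep_set (A \<union> B) E S" for S
  proof -
    have S: "S = (S \<inter> A) \<union> (S \<inter> B)" and no_edge: "\<And>a b. a \<in> S \<Longrightarrow> b \<in> S \<Longrightarrow> \<not> E a b"
      using that unfolding indep_set_def by auto
    have fin: "finite (f ` (S \<inter> A))" "finite (S \<inter> B)"
      using f(2) \<open>finite B\<close> by (auto intro: finite_subset)
    have disjoint: "f ` (S \<inter> A) \<inter> (S \<inter> B) = {}" using no_edge f(3) by blast
    have "card S = card ((S \<inter> A) \<union> (S \<inter> B))" using S by (rule arg_cong)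
    also have "\<dots> \<le> card (S \<inter> A) + card (S \<inter> B)" by (rule card_Un_le)
    also have "card (S \<inter> A) = card (f ` (S \<inter> A))"
      using inj_on_subset[OF f(1)] by (simp add: card_image)
    also have "card (f ` (S \<inter> A)) + card (S \<inter> B) = card (f ` (S \<inter> A) \<union> (S \<inter> B))"
      using fin disjoint by (simp add: card_Un_disjoint)
    also have "\<dots> \<le> card B" using f(2) \<open>finite B\<close> by (intro card_mono) auto
    finally show ?thesis .
  qed
  have "card ` {S. indep_set (A \<union> B) E S} \<subseteq> {..card B}" using bound by blast
  then have "finite (card ` {S. indep_set (A \<union> B) E S})" by (rule finite_subset) simp
  then show ?thesis unfolding independence_number_def using bound indep by (intro Max_eqI) auto
qed

definition flip_signs :: "real set \<Rightarrow> real set \<Rightarrow> real set" where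
  "flip_signs T N = (T - N) \<union> uminus ` N"

definition sign_decomposition :: "real set \<Rightarrow> real set \<times> real set" where
  "sign_decomposition S = (abs ` S, uminus ` {a \<in> S. a < 0})"

lemma abs_image_positive:
  fixes T :: "real set"
  assumes "\<forall>t\<in>T. 0 < t"
  shows "abs ` T = T"
proof -
  have "abs ` T = (\<lambda>t. t) ` T" using assms by (intro image_cong) auto
  then show ?thesis by simp
qed

lemma abs_flip_signs:
  assumes "\<forall>t\<in>T. 0 < t" and "N \<subseteq> T"
  shows "abs ` flip_signs T N = T"
proof -
  have "abs ` flip_signs T N = (T - N) \<union> N"
    using assms abs_image_positive[of "T - N"] abs_image_positive[of N]
    unfolding flip_signs_def image_Un image_image by (simp add: subset_iff)
  then show ?thesis using assms(2) by blast
qed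

lemma sign_decomposition_flip_signs:
  assumes "\<forall>t\<in>T. 0 < t" and "N \<subseteq> T"
  shows "sign_decomposition (flip_signs T N) = (T, N)"
proof -
  have "{a \<in> flip_signs T N. a < 0} = uminus ` N"
    using assms unfolding flip_signs_def by fastforce
  then show ?thesis using abs_flip_signs[OF assms] by (simp add: sign_decomposition_def image_image)
qed

lemma inj_on_abs_flip_signs:
  assumes "\<forall>t\<in>T. 0 < t" and "N \<subseteq> T"
  shows "inj_on abs (flip_signs T N)"
proof (rule inj_onI)
  fix a b assume "a \<in> flip_signs T N" "b \<in> flip_signs T N" "\<bar>a\<bar> = \<bar>b\<bar>"
  with assms show "a = b" unfolding flip_signs_def
    by (smt (verit, ccfv_threshold) DiffE UnE imageE subsetD)
qed

text \<open>\<open>\<phi>(B\<^sub>n)\<close> depends on \<open>x\<close> only through the ground set \<open>P = B\<^sub>n\<^sup>+\<close>, as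
  \<open>B\<^sub>n = P \<union> -(P - {max P})\<close>.\<close>

definition signed_subsets :: "real set \<Rightarrow> real set set" where
  "signed_subsets P = {S. S \<noteq> {} \<and> S \<subseteq> P \<union> uminus ` (P - {Max P}) \<and> inj_on abs S \<and>
      (\<exists>a\<in>S. a > 0 \<and> (\<forall>b\<in>S. \<bar>b\<bar> \<le> \<bar>a\<bar>))}"

locale positive_ground_set =
  fixes P :: "real set"
  assumes finite: "finite P" and positive: "p \<in> P \<Longrightarrow> 0 < p"
begin

lemma signed_subsetsI:
  assumes "S \<subseteq> P \<union> uminus ` (P - {Max P})" "inj_on abs S"
    and "a \<in> S" "0 < a" "\<And>b. b \<in> S \<Longrightarrow> \<bar>b\<bar> \<le> a"
  shows "S \<in> signed_subsets P"
  using assms unfolding signed_subsets_def by auto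

lemma flip_signs_in_signed_subsets:
  assumes T: "T \<subseteq> P" "T \<noteq> {}" and N: "N \<subseteq> T - {Max T}"
  shows "flip_signs T N \<in> signed_subsets P"
proof (rule signed_subsetsI)
  have fin: "finite T" using T finite finite_subset by blast
  have pos: "\<forall>t\<in>T. 0 < t" using T positive by blast
  have "t < Max P" if "t \<in> N" for t
  proof -
    have "t < Max T" using that N fin by (auto simp: less_le)
    also have "Max T \<le> Max P" using T finite by (intro Max_mono) auto
    finally show ?thesis .
  qed
  then have "N \<subseteq> P - {Max P}" using N T by fastforce
  then show "flip_signs T N \<subseteq> P \<union> uminus ` (P - {Max P})"
    using T unfolding flip_signs_def by blast
  show "inj_on abs (flip_signs T N)" using N pos by (intro inj_on_abs_flip_signs) auto
  show "Max T \<in> flip_signs T N" "0 < Max T" using fin T N pos unfolding flip_signs_def by auto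
  have "abs ` flip_signs T N = T" using pos N by (intro abs_flip_signs) auto
  then show "\<bar>b\<bar> \<le> Max T" if "b \<in> flip_signs T N" for b using that fin by (metis Max_ge imageI)
qed

lemma sign_decomposition_signed_subset:
  assumes "S \<in> signed_subsets P"
  shows "sign_decomposition S \<in> (SIGMA T:Pow P - {{}}. Pow (T - {Max T}))"
    and "case_prod flip_signs (sign_decomposition S) = S"
proof -
  obtain a where S: "S \<noteq> {}" "S \<subseteq> P \<union> uminus ` (P - {Max P})" "inj_on abs S"
    and a: "a \<in> S" "0 < a" "\<forall>b\<in>S. \<bar>b\<bar> \<le> \<bar>a\<bar>"
    using assms unfolding signed_subsets_def by blast
  define T where "T = abs ` S"
  define N where "N = uminus ` {b \<in> S. b < 0}"
  have nonzero: "b \<in> S \<Longrightarrow> b \<noteq> 0" for b using S(2) positive by fastforce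
  have opposite: "b \<in> S \<Longrightarrow> - b \<notin> S" for b
    using S(3) nonzero unfolding inj_on_def by (metis abs_minus_cancel equal_neg_zero)
  have fin: "finite S" using S(2) finite finite_subset by blast
  have "T \<subseteq> P" using S(2) positive unfolding T_def by force
  moreover have "Max T = a" unfolding T_def using fin a by (intro Max_eqI) (auto intro: rev_image_eqI)
  then have "N \<subseteq> T - {Max T}" unfolding N_def T_def using a(1) opposite by force
  ultimately show "sign_decomposition S \<in> (SIGMA T:Pow P - {{}}. Pow (T - {Max T}))"
    using S(1) unfolding sign_decomposition_def T_def N_def by blast
  show "case_prod flip_signs (sign_decomposition S) = S"
    unfolding sign_decomposition_def flip_signs_def using nonzero opposite by (force simp: abs_if)
qed

lemma bij_betw_flip_signs:
  "bij_betw (case_prod flip_signs) (SIGMA T:Pow P - {{}}. Pow (T - {Max T})) (signed_subsets P)"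
proof (rule bij_betw_byWitness[where f' = sign_decomposition])
  show "\<forall>p\<in>(SIGMA T:Pow P - {{}}. Pow (T - {Max T})). sign_decomposition (case_prod flip_signs p) = p"
  proof
    fix p assume "p \<in> (SIGMA T:Pow P - {{}}. Pow (T - {Max T}))"
    then obtain T N where "p = (T, N)" "T \<subseteq> P" "N \<subseteq> T" by blast
    moreover have "\<forall>t\<in>T. 0 < t" using \<open>T \<subseteq> P\<close> positive by blast
    ultimately show "sign_decomposition (case_prod flip_signs p) = p"
      by (simp add: sign_decomposition_flip_signs)
  qed
  show "case_prod flip_signs ` (SIGMA T:Pow P - {{}}. Pow (T - {Max T})) \<subseteq> signed_subsets P"
  proof (rule image_subsetI)
    fix p assume "p \<in> (SIGMA T:Pow P - {{}}. Pow (T - {Max T}))"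
    then obtain T N where "p = (T, N)" "T \<subseteq> P" "T \<noteq> {}" "N \<subseteq> T - {Max T}" by blast
    then show "case_prod flip_signs p \<in> signed_subsets P" by (simp add: flip_signs_in_signed_subsets)
  qed
  show "\<forall>S\<in>signed_subsets P. case_prod flip_signs (sign_decomposition S) = S"
    using sign_decomposition_signed_subset(2) by (rule ballI)
  show "sign_decomposition ` signed_subsets P \<subseteq> (SIGMA T:Pow P - {{}}. Pow (T - {Max T}))"
    using sign_decomposition_signed_subset(1) by (rule image_subsetI)
qed

lemma card_signed_subsets:
  "card (signed_subsets P) = (\<Sum>i=1..card P. 2^(i-1) * (card P choose i))"
  using bij_betw_same_card[OF bij_betw_flip_signs] card_Sigma_Pow_Diff_Max[OF finite] by simp

lemma finite_signed_subsets: "finite (signed_subsets P)"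
proof (rule finite_subset)
  show "signed_subsets P \<subseteq> Pow (P \<union> uminus ` P)" unfolding signed_subsets_def by blast
qed (simp add: finite)

lemma subset_in_signed_subsets: "X \<subseteq> P \<Longrightarrow> X \<noteq> {} \<Longrightarrow> X \<in> signed_subsets P"
  using flip_signs_in_signed_subsets[of X "{}"] by (simp add: flip_signs_def)

lemma negate_Min_matching:
  assumes X: "X \<subseteq> P" "2 \<le> card X"
  shows "flip_signs X {Min X} \<in> signed_subsets P" and "abs ` flip_signs X {Min X} = X"
    and "\<not> flip_signs X {Min X} \<subseteq> P"
proof -
  have fin: "finite X" and ne: "X \<noteq> {}" using X finite finite_subset by auto
  have pos: "\<forall>t\<in>X. 0 < t" using X positive by blast
  have "Min X < Max X" using X(2) fin by (rule Min_less_Max)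
  then have Min: "{Min X} \<subseteq> X - {Max X}" using fin ne by simp
  show "flip_signs X {Min X} \<in> signed_subsets P" using X ne Min by (intro flip_signs_in_signed_subsets)
  show "abs ` flip_signs X {Min X} = X" using pos Min by (intro abs_flip_signs) auto
  have "0 < Min X" using pos fin ne by simp
  then have "- Min X \<notin> P" using positive[of "- Min X"] by linarith
  moreover have "- Min X \<in> flip_signs X {Min X}" by (simp add: flip_signs_def)
  ultimately show "\<not> flip_signs X {Min X} \<subseteq> P" by blast
qed

definition singleton_partner :: "real \<Rightarrow> real set" where
  "singleton_partner p = (if p = Max P then {Min P, Max P} else {- p, Max P})"

lemma singleton_partner_matching:
  assumes "2 \<le> card P" and "p \<in> P"
  shows "singleton_partner p \<in> signed_subsets P - {Y. Y \<subseteq> P \<and> card Y = 1}"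
    and "p \<in> abs ` singleton_partner p"
proof -
  have p: "0 < p" using assms(2) positive by auto
  have "Max P \<in> P" using Max_in[OF finite] assms(2) by blast
  then have Max: "Max P \<in> P" "0 < Max P" using positive by auto
  have "singleton_partner p \<in> signed_subsets P - {Y. Y \<subseteq> P \<and> card Y = 1} \<and>
    p \<in> abs ` singleton_partner p"
  proof (cases "p = Max P")
    case True
    have "Min P < Max P" using assms(1) finite by (rule Min_less_Max)
    moreover have "Min P \<in> P" using Min_in[OF finite] assms(2) by blast
    ultimately show ?thesis
      using True Max unfolding singleton_partner_def by (auto intro!: subset_in_signed_subsets)
  next
    case False
    then have "p < Max P" using assms(2) finite by (simp add: order.not_eq_order_implies_strict)
    then have "Max {p, Max P} = Max P" by auto
    then have "flip_signs {p, Max P} {p} \<in> signed_subsets P"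
      using assms(2) Max False by (intro flip_signs_in_signed_subsets) auto
    moreover have "flip_signs {p, Max P} {p} = {- p, Max P}"
      using False by (auto simp: flip_signs_def)
    ultimately show ?thesis
      using False p Max unfolding singleton_partner_def by (auto simp: image_iff)
  qed
  then show "singleton_partner p \<in> signed_subsets P - {Y. Y \<subseteq> P \<and> card Y = 1}"
    and "p \<in> abs ` singleton_partner p" by auto
qed

lemma inj_on_singleton_partner: "inj_on singleton_partner P"
proof (rule inj_onI)
  fix p q assume "p \<in> P" "q \<in> P" and eq: "singleton_partner p = singleton_partner q"
  moreover have "Min P \<in> P" "Max P \<in> P"
    using Min_in[OF finite] Max_in[OF finite] \<open>p \<in> P\<close> by blast+
  ultimately have "0 < p" "0 < q" "0 < Min P" "0 < Max P" using positive by auto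
  then show "p = q" using eq unfolding singleton_partner_def
    by (auto simp: doubleton_eq_iff split: if_splits)
qed

lemma k_subsets_matching:
  assumes "1 \<le> k" and "2 \<le> card P"
  obtains f where "inj_on f {X. X \<subseteq> P \<and> card X = k}"
    and "\<And>X. X \<subseteq> P \<Longrightarrow> card X = k \<Longrightarrow> f X \<in> signed_subsets P - {Y. Y \<subseteq> P \<and> card Y = k}"
    and "\<And>X. X \<subseteq> P \<Longrightarrow> card X = k \<Longrightarrow> X \<subseteq> abs ` f X"
proof (cases "k = 1")
  case True
  have singleton: "\<exists>p\<in>P. X = {p}" if "X \<subseteq> P" "card X = k" for X
    using that True by (auto simp: card_1_singleton_iff)
  show ?thesis
  proof
    show "inj_on (singleton_partner \<circ> the_elem) {X. X \<subseteq> P \<and> card X = k}"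
    proof (rule inj_onI)
      fix X Y assume "X \<in> {X. X \<subseteq> P \<and> card X = k}" "Y \<in> {X. X \<subseteq> P \<and> card X = k}"
        and eq: "(singleton_partner \<circ> the_elem) X = (singleton_partner \<circ> the_elem) Y"
      then obtain p q where pq: "p \<in> P" "X = {p}" "q \<in> P" "Y = {q}"
        using singleton[of X] singleton[of Y] by auto
      then have "singleton_partner p = singleton_partner q" using eq by simp
      then have "p = q" using pq(1,3) by (rule inj_onD[OF inj_on_singleton_partner])
      then show "X = Y" using pq by simp
    qed
    fix X assume "X \<subseteq> P" "card X = k"
    then obtain p where "p \<in> P" "X = {p}" using singleton[of X] by auto
    then show "(singleton_partner \<circ> the_elem) X \<in> signed_subsets P - {Y. Y \<subseteq> P \<and> card Y = k}"
      and "X \<subseteq> abs ` (singleton_partner \<circ> the_elem) X"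
      using True singleton_partner_matching[OF assms(2) \<open>p \<in> P\<close>] by simp_all
  qed
next
  case False
  then have k: "2 \<le> k" using assms(1) by simp
  show ?thesis
  proof
    show "inj_on (\<lambda>X. flip_signs X {Min X}) {X. X \<subseteq> P \<and> card X = k}"
      using negate_Min_matching(2) k by (intro inj_on_inverseI[of _ "image abs"]) auto
    fix X assume "X \<subseteq> P" "card X = k"
    then show "flip_signs X {Min X} \<in> signed_subsets P - {Y. Y \<subseteq> P \<and> card Y = k}"
      and "X \<subseteq> abs ` flip_signs X {Min X}"
      using negate_Min_matching[of X] k by auto
  qed
qed

end

lemma Bplus_strict_mono_on:
  assumes "strict_mono_on {1..n} x" and "1 \<le> n"
  shows "card (Bplus x n) = n" and "Max (Bplus x n) = x n"
    and "x ` {1..n-1} = Bplus x n - {Max (Bplus x n)}"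
proof -
  have inj: "inj_on x {1..n}" using assms(1) by (rule strict_mono_on_imp_inj_on)
  then show "card (Bplus x n) = n" unfolding Bplus_def by (simp add: card_image)
  show max: "Max (Bplus x n) = x n"
    unfolding Bplus_def using assms by (intro Max_eqI) (auto simp: strict_mono_on_leD)
  have "{1..n-1} = {1..n} - {n}" using assms(2) by auto
  then show "x ` {1..n-1} = Bplus x n - {Max (Bplus x n)}"
    unfolding max using inj assms(2) by (simp add: Bplus_def inj_on_image_set_diff)
qed

lemma phiB_eq_signed_subsets:
  assumes "strict_mono_on {1..n} x" and "1 \<le> n"
  shows "phiB x n = signed_subsets (Bplus x n)"
proof -
  have "Bset x n = Bplus x n \<union> uminus ` (Bplus x n - {Max (Bplus x n)})"
    unfolding Bset_def using Bplus_strict_mono_on(3)[OF assms] by (simp add: Bplus_def)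
  then show ?thesis unfolding phiB_def signed_subsets_def by simp
qed

theorem mainTheorem2:
  fixes x :: "nat \<Rightarrow> real" and n k :: nat
  assumes "n \<ge> 2" and "1 \<le> k" and "k < n"
    and "\<And>i. 1 \<le> i \<Longrightarrow> i \<le> n \<Longrightarrow> x i > 0"
    and "\<And>i j. 1 \<le> i \<Longrightarrow> i < j \<Longrightarrow> j \<le> n \<Longrightarrow> x i < x j"
  shows "independence_number (HB_vertices x n k) (HB_adj x n k)
           = (\<Sum>i=1..n. 2^(i-1) * (n choose i)) - (n choose k)
         \<and> indep_set (HB_vertices x n k) (HB_adj x n k) (V2 x n k)
         \<and> card (V2 x n k) = independence_number (HB_vertices x n k) (HB_adj x n k)"
proof -
  have mono: "strict_mono_on {1..n} x" using assms(5) by (intro strict_mono_onI) auto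
  interpret positive_ground_set "Bplus x n"
    using assms(4) by unfold_locales (auto simp: Bplus_def)
  have card_P: "card (Bplus x n) = n" using Bplus_strict_mono_on(1) mono assms(1) by simp
  have phiB: "phiB x n = signed_subsets (Bplus x n)" using phiB_eq_signed_subsets mono assms(1) by simp
  have V1: "V1 x n k \<subseteq> phiB x n"
    unfolding phiB V1_def using assms(2) by (auto intro: subset_in_signed_subsets)
  have card_V2: "card (V2 x n k) = (\<Sum>i=1..n. 2^(i-1) * (n choose i)) - (n choose k)"
    using card_Diff_subset[OF finite_subset[OF V1] V1] finite_signed_subsets card_signed_subsets
      n_subsets[OF finite, of k] card_P unfolding V2_def phiB V1_def by simp
  have indep: "indep_set (HB_vertices x n k) (HB_adj x n k) (V2 x n k)"
    unfolding indep_set_def HB_vertices_def HB_adj_def V2_def by blast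
  have "2 \<le> card (Bplus x n)" using card_P assms(1) by simp
  obtain f where f: "inj_on f (V1 x n k)" "\<And>X. X \<in> V1 x n k \<Longrightarrow> f X \<in> V2 x n k"
    "\<And>X. X \<in> V1 x n k \<Longrightarrow> X \<subseteq> dagger (f X)"
  proof (rule k_subsets_matching[OF assms(2) \<open>2 \<le> card (Bplus x n)\<close>])
    fix g assume "inj_on g {X. X \<subseteq> Bplus x n \<and> card X = k}"
      "\<And>X. X \<subseteq> Bplus x n \<Longrightarrow> card X = k \<Longrightarrow>
        g X \<in> signed_subsets (Bplus x n) - {Y. Y \<subseteq> Bplus x n \<and> card Y = k}"
      "\<And>X. X \<subseteq> Bplus x n \<Longrightarrow> card X = k \<Longrightarrow> X \<subseteq> abs ` g X"
    then show thesis by (intro that[of g]) (simp_all add: V1_def V2_def phiB dagger_def)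
  qed
  have "independence_number (V1 x n k \<union> V2 x n k) (HB_adj x n k) = card (V2 x n k)"
  proof (rule independence_number_eq_card_if_matching)
    show "finite (V2 x n k)" unfolding V2_def phiB using finite_signed_subsets by simp
    show "f ` V1 x n k \<subseteq> V2 x n k" using f(2) by (rule image_subsetI)
    show "HB_adj x n k X (f X)" if "X \<in> V1 x n k" for X
      unfolding HB_adj_def using that f(2,3) by blast
  qed (use indep f(1) in \<open>simp_all add: HB_vertices_def\<close>)
  then show ?thesis using card_V2 indep by (simp add: HB_vertices_def)
qed

end
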